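(* Let $A$ be a prime algebra (over a field $\Bbbk$ of characteristic $0$) which is a finite module over its center $Z$, and let $\phi\in\mathrm{Oz}(A)$. (1) There is a regular normal element $a\in A$ such that $\phi=\eta_a$, i.e. $a\phi(x)=xa$ for all $x\in A$. (2) If further $A$ is a $G$-graded domain, where $G$ is an ordered abelian group, then there is a nonzero normal homogeneous element $a\in A$ with $\phi=\eta_a$. (3) If further $A$ is a $\mathbb{Z}^n$-graded domain, then $\mathrm{Oz}_{gr}(A)=\mathrm{Oz}(A)$.
   Context: $\mathrm{Oz}(A)$ is the group of algebra automorphisms of $A$ fixing $Z$ pointwise; $\mathrm{Oz}_{gr}(A)$ is the subgroup of those that are graded (preserve the given grading). For a regular normal element $w$, $\eta_w:A\to A$ is the automorphism $\eta_w(x)=w^{-1}xw$, i.e. the unique element with $w\,\eta_w(x)=xw$. *)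

theory Defs
  imports "HOL-Analysis.Finite_Cartesian_Product"
begin

definition center :: "'a::ring_1 set" where
  "center = {z. \<forall>x. z * x = x * z}"

definition k_algebra :: "('k::field \<Rightarrow> 'a::ring_1) \<Rightarrow> bool" where
  "k_algebra \<iota> \<longleftrightarrow> \<iota> 1 = 1 \<and> (\<forall>a b. \<iota> (a + b) = \<iota> a + \<iota> b)
     \<and> (\<forall>a b. \<iota> (a * b) = \<iota> a * \<iota> b) \<and> (\<forall>c. \<iota> c \<in> center)"

definition prime_ring :: "'a::ring_1 itself \<Rightarrow> bool" where
  "prime_ring _ \<longleftrightarrow> (0::'a) \<noteq> 1 \<and>
     (\<forall>a b::'a. (\<forall>r. a * r * b = 0) \<longrightarrow> a = 0 \<or> b = 0)"

definition is_domain :: "'a::ring_1 itself \<Rightarrow> bool" where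
  "is_domain _ \<longleftrightarrow> (0::'a) \<noteq> 1 \<and> (\<forall>a b::'a. a * b = 0 \<longrightarrow> a = 0 \<or> b = 0)"

definition finite_over_center :: "'a::ring_1 itself \<Rightarrow> bool" where
  "finite_over_center _ \<longleftrightarrow> (\<exists>S::'a set. finite S \<and>
     (\<forall>x. \<exists>c. (\<forall>s\<in>S. c s \<in> center) \<and> x = (\<Sum>s\<in>S. c s * s)))"

definition regular_elem :: "'a::ring_1 \<Rightarrow> bool" where
  "regular_elem a \<longleftrightarrow> (\<forall>x. (a * x = 0 \<longrightarrow> x = 0) \<and> (x * a = 0 \<longrightarrow> x = 0))"

definition normal_elem :: "'a::ring_1 \<Rightarrow> bool" where
  "normal_elem a \<longleftrightarrow> {a * x | x. True} = {x * a | x. True}"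

definition Oz :: "('k::field \<Rightarrow> 'a::ring_1) \<Rightarrow> ('a \<Rightarrow> 'a) set" where
  "Oz \<iota> = {\<phi>. bij \<phi> \<and> (\<forall>x y. \<phi> (x + y) = \<phi> x + \<phi> y) \<and> (\<forall>x y. \<phi> (x * y) = \<phi> x * \<phi> y)
     \<and> \<phi> 1 = 1 \<and> (\<forall>c x. \<phi> (\<iota> c * x) = \<iota> c * \<phi> x) \<and> (\<forall>z\<in>center. \<phi> z = z)}"

definition graded_algebra :: "('k::field \<Rightarrow> 'a::ring_1) \<Rightarrow> ('g::ab_group_add \<Rightarrow> 'a set) \<Rightarrow> bool" where
  "graded_algebra \<iota> Ag \<longleftrightarrow>
     (\<forall>g. 0 \<in> Ag g \<and> (\<forall>x\<in>Ag g. \<forall>y\<in>Ag g. x + y \<in> Ag g) \<and> (\<forall>c. \<forall>x\<in>Ag g. \<iota> c * x \<in> Ag g))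
     \<and> (\<forall>g h. \<forall>x\<in>Ag g. \<forall>y\<in>Ag h. x * y \<in> Ag (g + h))
     \<and> (\<forall>x. \<exists>!c. finite {g. c g \<noteq> 0} \<and> (\<forall>g. c g \<in> Ag g) \<and> x = (\<Sum>g\<in>{g. c g \<noteq> 0}. c g))"

definition homogeneous :: "('g \<Rightarrow> 'a set) \<Rightarrow> 'a \<Rightarrow> bool" where
  "homogeneous Ag a \<longleftrightarrow> (\<exists>g. a \<in> Ag g)"

definition Oz_gr :: "('k::field \<Rightarrow> 'a::ring_1) \<Rightarrow> ('g \<Rightarrow> 'a set) \<Rightarrow> ('a \<Rightarrow> 'a) set" where
  "Oz_gr \<iota> Ag = {\<phi> \<in> Oz \<iota>. \<forall>g. \<phi> ` Ag g = Ag g}"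

end

(* An automorphism fixing the center Z extends to the central localization Q of A, a
   finite-dimensional prime algebra over the field of fractions of Z, which is the center of Q.
   Prime finite-dimensional algebras are simple, so Skolem-Noether applies: the extension is
   implemented by some c = a/s in Q, and then a phi(x) = x a in A. If A is a domain graded by a
   group that embeds into an ordered group, comparing the top components of x a = a phi(x)
   shows that phi preserves degrees; hence every homogeneous component of a implements phi as
   well, and Z^n-gradings are preserved, Z^n being an additive subgroup of the ordered group of
   integer polynomials. *)

theory Submission
  imports Defs "HOL-Library.Function_Algebras" "HOL-Computational_Algebra.Polynomial"
begin

section \<open>The central localization\<close>

lemma center_commute: "z \<in> center \<Longrightarrow> x * z = z * (x::'a::ring_1)"
  by (simp add: center_def)

lemma center_left_commute: "z \<in> center \<Longrightarrow> x * (z * y) = z * (x * (y::'a::ring_1))"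
  by (metis center_commute mult.assoc)

lemma zero_in_center: "0 \<in> center"
  by (simp add: center_def)

lemma one_in_center: "1 \<in> center"
  by (simp add: center_def)

lemma center_add: "a \<in> center \<Longrightarrow> b \<in> center \<Longrightarrow> a + b \<in> center"
  by (simp add: center_def algebra_simps)

lemma center_uminus: "a \<in> center \<Longrightarrow> - a \<in> center"
  by (simp add: center_def)

lemma center_mult:
  assumes "a \<in> center" and "b \<in> center"
  shows "a * b \<in> (center :: 'a::ring_1 set)"
  unfolding center_def
proof (intro CollectI allI)
  fix x
  have "a * b * x = a * (x * b)" using center_commute[OF assms(2), of x] by (simp add: mult.assoc)
  also have "\<dots> = x * a * b" using center_commute[OF assms(1), of x] by (simp add: mult.assoc)
  finally show "a * b * x = x * (a * b)" by (simp add: mult.assoc)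
qed

definition regular_center :: "'a::ring_1 set" where
  "regular_center = {s \<in> center. \<forall>x. s * x = 0 \<longrightarrow> x = 0}"

lemma regular_center_in_center: "s \<in> regular_center \<Longrightarrow> s \<in> center"
  by (simp add: regular_center_def)

lemma regular_centerD: "s \<in> regular_center \<Longrightarrow> s * x = 0 \<Longrightarrow> x = 0"
  by (simp add: regular_center_def)

lemma one_in_regular_center: "1 \<in> regular_center"
  by (simp add: regular_center_def one_in_center)

lemma regular_center_commute:
  "s \<in> regular_center \<Longrightarrow> x * s = s * x"
  "s \<in> regular_center \<Longrightarrow> x * (s * y) = s * (x * y)"
  by (simp_all add: regular_center_in_center center_commute center_left_commute)

lemma regular_center_mult:
  assumes "s \<in> regular_center" and "t \<in> regular_center"
  shows "s * t \<in> regular_center"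
proof -
  have "x = 0" if "s * t * x = 0" for x
  proof -
    have "s * (t * x) = 0" using that by (simp add: mult.assoc)
    then have "t * x = 0" by (rule regular_centerD[OF assms(1)])
    then show "x = 0" by (rule regular_centerD[OF assms(2)])
  qed
  then show ?thesis
    using assms center_mult regular_center_in_center unfolding regular_center_def by blast
qed

lemma regular_center_cancel:
  assumes "s \<in> regular_center" and "x * s = y * s"
  shows "x = y"
proof -
  have "s * (x - y) = (x - y) * s"
    using regular_center_commute(1)[OF assms(1)] by simp
  also have "\<dots> = 0"
    using assms(2) by (simp add: algebra_simps)
  finally have "x - y = 0"
    by (rule regular_centerD[OF assms(1)])
  then show ?thesis by simp
qed

definition frac_rel :: "'a::ring_1 \<times> 'a \<Rightarrow> 'a \<times> 'a \<Rightarrow> bool" where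
  "frac_rel x y \<longleftrightarrow>
     snd x \<in> regular_center \<and> snd y \<in> regular_center \<and> fst x * snd y = fst y * snd x"

declare frac_rel_def [simp]

lemma part_equivp_frac_rel: "part_equivp (frac_rel :: 'a::ring_1 \<times> 'a \<Rightarrow> _)"
proof (rule part_equivpI)
  show "\<exists>x::'a \<times> 'a. frac_rel x x"
    by (rule exI[of _ "(0, 1)"]) (simp add: one_in_regular_center)
  show "symp (frac_rel :: 'a \<times> 'a \<Rightarrow> _)"
    by (simp add: symp_def)
  show "transp (frac_rel :: 'a \<times> 'a \<Rightarrow> _)"
  proof (rule transpI, unfold split_paired_all)
    fix a s b t c u :: 'a
    assume st: "frac_rel (a, s) (b, t)" and tu: "frac_rel (b, t) (c, u)"
    then have central: "s \<in> center" "t \<in> center" "u \<in> center"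
      by (auto simp: regular_center_in_center)
    have "(a * u) * t = (a * t) * u" using central by (simp add: mult.assoc center_commute)
    also have "\<dots> = (b * s) * u" using st by simp
    also have "\<dots> = (b * u) * s" using central by (simp add: mult.assoc center_commute)
    also have "\<dots> = (c * t) * s" using tu by simp
    also have "\<dots> = (c * s) * t" using central by (simp add: mult.assoc center_commute)
    finally show "frac_rel (a, s) (c, u)"
      using st tu by (auto intro: regular_center_cancel)
  qed
qed

text \<open>The central localization of A at its regular central elements; the pair (a, s)
  stands for the fraction a/s.\<close>

quotient_type (overloaded) 'a central_loc = "'a::ring_1 \<times> 'a" / partial: frac_rel
  by (rule part_equivp_frac_rel)

instantiation central_loc :: (ring_1) ring_1
begin

lift_definition zero_central_loc :: "'a central_loc" is "(0, 1)"
  by (simp add: one_in_regular_center)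

lift_definition one_central_loc :: "'a central_loc" is "(1, 1)"
  by (simp add: one_in_regular_center)

lift_definition plus_central_loc :: "'a central_loc \<Rightarrow> 'a central_loc \<Rightarrow> 'a central_loc"
  is "\<lambda>x y. (fst x * snd y + fst y * snd x, snd x * snd y)"
proof (unfold split_paired_all, simp only: fst_conv snd_conv frac_rel_def, elim conjE, intro conjI)
  fix a s a' s' b t b' t' :: 'a
  assume h: "s \<in> regular_center" "s' \<in> regular_center" "a * s' = a' * s"
    "t \<in> regular_center" "t' \<in> regular_center" "b * t' = b' * t"
  show "s * t \<in> regular_center" "s' * t' \<in> regular_center"
    using h by (simp_all add: regular_center_mult)
  have "(a * t + b * s) * (s' * t') = (a * s') * (t * t') + (b * t') * (s * s')"
    using h(1,2,4,5) by (simp add: algebra_simps regular_center_commute)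
  also have "\<dots> = (a' * s) * (t * t') + (b' * t) * (s * s')"
    by (simp only: h(3,6))
  also have "\<dots> = (a' * t' + b' * s') * (s * t)"
    using h(1,2,4,5) by (simp add: algebra_simps regular_center_commute)
  finally show "(a * t + b * s) * (s' * t') = (a' * t' + b' * s') * (s * t)" .
qed

lift_definition uminus_central_loc :: "'a central_loc \<Rightarrow> 'a central_loc"
  is "\<lambda>x. (- fst x, snd x)"
  by auto

definition minus_central_loc :: "'a central_loc \<Rightarrow> 'a central_loc \<Rightarrow> 'a central_loc"
  where "minus_central_loc x y = x + - y"

lift_definition times_central_loc :: "'a central_loc \<Rightarrow> 'a central_loc \<Rightarrow> 'a central_loc"
  is "\<lambda>x y. (fst x * fst y, snd x * snd y)"
proof (unfold split_paired_all, simp only: fst_conv snd_conv frac_rel_def, elim conjE, intro conjI)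
  fix a s a' s' b t b' t' :: 'a
  assume h: "s \<in> regular_center" "s' \<in> regular_center" "a * s' = a' * s"
    "t \<in> regular_center" "t' \<in> regular_center" "b * t' = b' * t"
  show "s * t \<in> regular_center" "s' * t' \<in> regular_center"
    using h by (simp_all add: regular_center_mult)
  have "(a * b) * (s' * t') = (a * s') * (b * t')"
    using regular_center_commute(2)[OF h(2), of b t'] by (simp add: mult.assoc)
  also have "\<dots> = (a' * s) * (b' * t)"
    by (simp only: h(3,6))
  also have "\<dots> = (a' * b') * (s * t)"
    using regular_center_commute(2)[OF h(1), of b' t] by (simp add: mult.assoc)
  finally show "(a * b) * (s' * t') = (a' * b') * (s * t)" .
qed

instance
proof
  fix x y z :: "'a central_loc"
  show "x + y + z = x + (y + z)"
    by transfer (auto simp: algebra_simps regular_center_commute regular_center_mult)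
  show "x + y = y + x"
    by transfer (auto simp: algebra_simps regular_center_commute regular_center_mult)
  show "0 + x = x"
    by transfer (auto simp: algebra_simps regular_center_commute regular_center_mult)
  show "- x + x = 0"
    by transfer (auto simp: algebra_simps regular_center_commute regular_center_mult
        one_in_regular_center)
  show "x - y = x + - y"
    by (simp add: minus_central_loc_def)
  show "x * y * z = x * (y * z)"
    by transfer (auto simp: algebra_simps regular_center_commute regular_center_mult)
  show "1 * x = x"
    by transfer (auto simp: algebra_simps regular_center_commute regular_center_mult)
  show "x * 1 = x"
    by transfer (auto simp: algebra_simps regular_center_commute regular_center_mult)
  show "(x + y) * z = x * z + y * z"
    by transfer (auto simp: algebra_simps regular_center_commute regular_center_mult)
  show "x * (y + z) = x * y + x * z"
    by transfer (auto simp: algebra_simps regular_center_commute regular_center_mult)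
  show "(0::'a central_loc) \<noteq> 1"
    by transfer (simp add: one_in_regular_center)
qed

end

lift_definition cfrac :: "'a::ring_1 \<Rightarrow> 'a \<Rightarrow> 'a central_loc"
  is "\<lambda>a s. if s \<in> regular_center then (a, s) else (0, 1)"
  by (auto simp: one_in_regular_center)

lemma central_loc_cases [cases type: central_loc]:
  obtains a s where "q = cfrac a s" "s \<in> regular_center"
  by transfer auto

lemma cfrac_eq_iff:
  "s \<in> regular_center \<Longrightarrow> t \<in> regular_center \<Longrightarrow> cfrac a s = cfrac b t \<longleftrightarrow> a * t = b * s"
  by transfer simp

lemma zero_eq_cfrac: "0 = cfrac 0 1"
  by transfer (simp add: one_in_regular_center)

lemma one_eq_cfrac: "1 = cfrac 1 1"
  by transfer (simp add: one_in_regular_center)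

lemma cfrac_add:
  "s \<in> regular_center \<Longrightarrow> t \<in> regular_center \<Longrightarrow>
    cfrac a s + cfrac b t = cfrac (a * t + b * s) (s * t)"
  by transfer (simp add: regular_center_mult)

lemma cfrac_mult:
  "s \<in> regular_center \<Longrightarrow> t \<in> regular_center \<Longrightarrow> cfrac a s * cfrac b t = cfrac (a * b) (s * t)"
  by transfer (simp add: regular_center_mult)

lemma cfrac_eq_0_iff: "s \<in> regular_center \<Longrightarrow> cfrac a s = 0 \<longleftrightarrow> a = 0"
  by (simp add: zero_eq_cfrac cfrac_eq_iff one_in_regular_center)

definition to_loc :: "'a::ring_1 \<Rightarrow> 'a central_loc" where
  "to_loc a = cfrac a 1"

lemma to_loc_0: "to_loc 0 = 0"
  by (simp add: to_loc_def zero_eq_cfrac)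

lemma to_loc_add: "to_loc (a + b) = to_loc a + to_loc b"
  by (simp add: to_loc_def cfrac_add one_in_regular_center)

lemma to_loc_mult: "to_loc (a * b) = to_loc a * to_loc b"
  by (simp add: to_loc_def cfrac_mult one_in_regular_center)

lemma to_loc_inject: "to_loc a = to_loc b \<longleftrightarrow> a = b"
  by (simp add: to_loc_def cfrac_eq_iff one_in_regular_center)

lemma to_loc_sum: "to_loc (sum f A) = (\<Sum>x\<in>A. to_loc (f x))"
  by (induction A rule: infinite_finite_induct)
    (simp_all add: to_loc_add to_loc_0)

lemma cfrac_mult_to_loc: "s \<in> regular_center \<Longrightarrow> cfrac a s * to_loc s = to_loc a"
  by (simp add: to_loc_def cfrac_mult one_in_regular_center cfrac_eq_iff)

lemma cfrac_eq_to_loc_mult: "s \<in> regular_center \<Longrightarrow> cfrac a s = to_loc a * cfrac 1 s"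
  by (simp add: to_loc_def cfrac_mult one_in_regular_center)

lemma to_loc_in_center:
  assumes z: "z \<in> center"
  shows "to_loc z \<in> center"
  unfolding center_def
proof (intro CollectI allI)
  fix q :: "'a central_loc"
  obtain a s where q: "q = cfrac a s" "s \<in> regular_center" by (cases q)
  show "to_loc z * q = q * to_loc z"
    using q center_commute[OF z, of a]
    by (simp add: to_loc_def cfrac_mult one_in_regular_center cfrac_eq_iff)
qed

lemma in_center_if_to_loc_in_center:
  assumes "to_loc z \<in> center"
  shows "z \<in> center"
proof -
  have "to_loc z * to_loc x = to_loc x * to_loc z" for x
    using assms by (simp add: center_def)
  then have "z * x = x * z" for x
    by (simp add: to_loc_mult[symmetric] to_loc_inject)
  then show ?thesis by (simp add: center_def)
qed

lemma cfrac_1_in_center: "s \<in> regular_center \<Longrightarrow> cfrac 1 s \<in> center"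
  unfolding center_def
proof (intro CollectI allI)
  fix q :: "'a central_loc"
  assume s: "s \<in> regular_center"
  obtain a t where q: "q = cfrac a t" "t \<in> regular_center" by (cases q)
  show "cfrac 1 s * q = q * cfrac 1 s"
    using q s regular_center_commute(1)[OF s, of a] regular_center_commute(1)[OF s, of t]
    by (simp add: cfrac_mult cfrac_eq_iff regular_center_mult mult.assoc)
qed

lemma center_central_loc_eq_cfrac:
  assumes "q \<in> center"
  obtains z t where "z \<in> center" "t \<in> regular_center" "q = cfrac z t"
proof -
  obtain a s where q: "q = cfrac a s" "s \<in> regular_center" by (cases q)
  have "to_loc a = q * to_loc s" using q by (simp add: cfrac_mult_to_loc)
  also have "\<dots> \<in> center"
    using assms to_loc_in_center[OF regular_center_in_center[OF q(2)]] by (rule center_mult)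
  finally have "a \<in> center" by (rule in_center_if_to_loc_in_center)
  with q that show ?thesis by blast
qed

section \<open>The field of fractions of the center\<close>

lemma prime_ringD:
  "prime_ring TYPE('a::ring_1) \<Longrightarrow> (\<And>r. (a::'a) * r * b = 0) \<Longrightarrow> a = 0 \<or> b = 0"
  unfolding prime_ring_def by blast

lemma regular_center_if_prime:
  assumes prime: "prime_ring TYPE('a::ring_1)" and "(z::'a) \<in> center" and "z \<noteq> 0"
  shows "z \<in> regular_center"
proof -
  have "x = 0" if "z * x = 0" for x
  proof -
    have "z * r * x = 0" for r
      using that center_commute[OF assms(2), of r] by (metis mult.assoc mult_zero_right)
    then show ?thesis using prime_ringD[OF prime] assms(3) by blast
  qed
  then show ?thesis using assms(2) by (simp add: regular_center_def)
qed

lemma prime_central_loc: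
  assumes prime: "prime_ring TYPE('a::ring_1)" and "\<And>r. (x::'a central_loc) * r * y = 0"
  shows "x = 0 \<or> y = 0"
proof -
  obtain a s where x: "x = cfrac a s" "s \<in> regular_center" by (cases x)
  obtain b t where y: "y = cfrac b t" "t \<in> regular_center" by (cases y)
  have "a * r * b = 0" for r
  proof -
    have "cfrac a s * cfrac r 1 * cfrac b t = 0" using assms(2) x y by simp
    then show ?thesis
      using x y by (simp add: cfrac_mult cfrac_eq_0_iff one_in_regular_center regular_center_mult)
  qed
  then have "a = 0 \<or> b = 0" using prime_ringD[OF prime] by blast
  then show ?thesis using x y by (auto simp: cfrac_eq_0_iff)
qed

lemma central_loc_center_invertible:
  assumes prime: "prime_ring TYPE('a::ring_1)" and "(q::'a central_loc) \<in> center" and "q \<noteq> 0"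
  shows "\<exists>r. r \<in> center \<and> r * q = 1"
proof -
  obtain z t where zt: "z \<in> center" "t \<in> regular_center" "q = cfrac z t"
    using center_central_loc_eq_cfrac[OF assms(2)] by blast
  have "z \<noteq> 0" using zt assms(3) by (auto simp: cfrac_eq_0_iff)
  then have z: "z \<in> regular_center" using regular_center_if_prime[OF prime zt(1)] by blast
  have "cfrac t z * q = 1"
    using zt z regular_center_commute(1)[OF zt(2), of z]
    by (simp add: cfrac_mult one_eq_cfrac cfrac_eq_iff one_in_regular_center regular_center_mult)
  moreover have "cfrac t z \<in> center"
    using cfrac_eq_to_loc_mult[OF z, of t] to_loc_in_center[OF regular_center_in_center[OF zt(2)]]
      cfrac_1_in_center[OF z] center_mult by metis
  ultimately show ?thesis by blast
qed

definition central_inverse :: "'a::ring_1 central_loc \<Rightarrow> 'a central_loc" where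
  "central_inverse q = (if q = 0 then 0 else SOME r. r \<in> center \<and> r * q = 1)"

lemma central_inverse:
  assumes "prime_ring TYPE('a::ring_1)" and "(q::'a central_loc) \<in> center" and "q \<noteq> 0"
  shows "central_inverse q \<in> center" and "central_inverse q * q = 1"
  using someI_ex[OF central_loc_center_invertible[OF assms]] assms(3)
  by (simp_all add: central_inverse_def)

text \<open>The field of fractions of Z, realized as the center of the central localization. As a
  type class instance cannot depend on primeness, the carrier falls back to the field
  {0, 1} of two elements when A is not prime.\<close>

typedef (overloaded) 'a center_field =
  "if prime_ring TYPE('a::ring_1) then (center :: 'a central_loc set) else {0, 1}"
  morphisms Rep_cf Abs_cf
  by (rule exI[of _ 0]) (simp add: zero_in_center)

lemma Rep_cf_in_center: "prime_ring TYPE('a::ring_1) \<Longrightarrow> Rep_cf (x :: 'a center_field) \<in> center"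
  using Rep_cf[of x] by simp

lemma Rep_cf_not_prime:
  "\<not> prime_ring TYPE('a::ring_1) \<Longrightarrow> Rep_cf (x :: 'a center_field) = 0 \<or> Rep_cf x = 1"
  using Rep_cf[of x] by simp

lemma Abs_cf_inverse_center:
  "prime_ring TYPE('a::ring_1) \<Longrightarrow> (q::'a central_loc) \<in> center \<Longrightarrow>
    Rep_cf (Abs_cf q :: 'a center_field) = q"
  by (rule Abs_cf_inverse) simp

lemma Abs_cf_inverse_01:
  "(q::'a::ring_1 central_loc) = 0 \<or> q = 1 \<Longrightarrow> Rep_cf (Abs_cf q :: 'a center_field) = q"
  by (rule Abs_cf_inverse) (auto simp: zero_in_center one_in_center)

instantiation center_field :: (ring_1) field
begin

definition zero_center_field :: "'a center_field" where "zero_center_field = Abs_cf 0"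

definition one_center_field :: "'a center_field" where "one_center_field = Abs_cf 1"

definition plus_center_field :: "'a center_field \<Rightarrow> 'a center_field \<Rightarrow> 'a center_field" where
  "plus_center_field x y = Abs_cf (if prime_ring TYPE('a) then Rep_cf x + Rep_cf y
     else if Rep_cf x = Rep_cf y then 0 else 1)"

definition uminus_center_field :: "'a center_field \<Rightarrow> 'a center_field" where
  "uminus_center_field x = Abs_cf (if prime_ring TYPE('a) then - Rep_cf x else Rep_cf x)"

definition minus_center_field :: "'a center_field \<Rightarrow> 'a center_field \<Rightarrow> 'a center_field" where
  "minus_center_field x y = x + - y"

definition times_center_field :: "'a center_field \<Rightarrow> 'a center_field \<Rightarrow> 'a center_field" where
  "times_center_field x y = Abs_cf (if prime_ring TYPE('a) then Rep_cf x * Rep_cf y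
     else if Rep_cf x = 1 \<and> Rep_cf y = 1 then 1 else 0)"

definition inverse_center_field :: "'a center_field \<Rightarrow> 'a center_field" where
  "inverse_center_field x =
     Abs_cf (if prime_ring TYPE('a) then central_inverse (Rep_cf x) else Rep_cf x)"

definition divide_center_field :: "'a center_field \<Rightarrow> 'a center_field \<Rightarrow> 'a center_field" where
  "divide_center_field x y = x * inverse y"

lemma Rep_cf_zero: "Rep_cf (0::'a center_field) = 0"
  unfolding zero_center_field_def by (simp add: Abs_cf_inverse_01)

lemma Rep_cf_one: "Rep_cf (1::'a center_field) = 1"
  unfolding one_center_field_def by (simp add: Abs_cf_inverse_01)

lemma Rep_cf_plus: "Rep_cf (x + y :: 'a center_field) = (if prime_ring TYPE('a)
    then Rep_cf x + Rep_cf y else if Rep_cf x = Rep_cf y then 0 else 1)"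
  unfolding plus_center_field_def
  by (simp add: Abs_cf_inverse_center Abs_cf_inverse_01 Rep_cf_in_center center_add)

lemma Rep_cf_uminus:
  "Rep_cf (- x :: 'a center_field) = (if prime_ring TYPE('a) then - Rep_cf x else Rep_cf x)"
  unfolding uminus_center_field_def
  by (cases "prime_ring TYPE('a)")
    (simp_all add: Abs_cf_inverse_center Rep_cf_in_center center_uminus Abs_cf_inverse_01
      Rep_cf_not_prime)

lemma Rep_cf_times: "Rep_cf (x * y :: 'a center_field) = (if prime_ring TYPE('a)
    then Rep_cf x * Rep_cf y else if Rep_cf x = 1 \<and> Rep_cf y = 1 then 1 else 0)"
  unfolding times_center_field_def
  by (simp add: Abs_cf_inverse_center Abs_cf_inverse_01 Rep_cf_in_center center_mult)

lemma Rep_cf_inverse_eq: "Rep_cf (inverse x :: 'a center_field) =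
    (if prime_ring TYPE('a) then central_inverse (Rep_cf x) else Rep_cf x)"
proof (cases "prime_ring TYPE('a)")
  case True
  then have "central_inverse (Rep_cf x) \<in> center"
    using central_inverse(1)[OF True Rep_cf_in_center[OF True]]
    by (cases "Rep_cf x = 0") (simp_all add: central_inverse_def zero_in_center)
  with True show ?thesis by (simp add: inverse_center_field_def Abs_cf_inverse_center)
next
  case False
  then show ?thesis
    by (simp add: inverse_center_field_def Abs_cf_inverse_01 Rep_cf_not_prime)
qed

lemma cf_eqI: "Rep_cf (x::'a center_field) = Rep_cf y \<Longrightarrow> x = y"
  by (simp add: Rep_cf_inject)

instance
proof
  fix x y z :: "'a center_field"
  have nz: "(0::'a central_loc) \<noteq> 1" by simp
  note not_prime = Rep_cf_not_prime[of x] Rep_cf_not_prime[of y] Rep_cf_not_prime[of z]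
  show "x + y + z = x + (y + z)"
    by (rule cf_eqI) (cases "prime_ring TYPE('a)"; insert not_prime nz;
        auto simp: Rep_cf_plus algebra_simps)
  show "x + y = y + x"
    by (rule cf_eqI) (cases "prime_ring TYPE('a)"; insert not_prime nz;
        auto simp: Rep_cf_plus algebra_simps)
  show "0 + x = x"
    by (rule cf_eqI) (cases "prime_ring TYPE('a)"; insert not_prime nz;
        auto simp: Rep_cf_plus Rep_cf_zero)
  show "- x + x = 0"
    by (rule cf_eqI) (cases "prime_ring TYPE('a)"; insert not_prime nz;
        auto simp: Rep_cf_plus Rep_cf_zero Rep_cf_uminus)
  show "x - y = x + - y"
    by (simp add: minus_center_field_def)
  show "x * y * z = x * (y * z)"
    by (rule cf_eqI) (cases "prime_ring TYPE('a)"; insert not_prime nz;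
        auto simp: Rep_cf_times algebra_simps)
  show "x * y = y * x"
    by (rule cf_eqI) (cases "prime_ring TYPE('a)"; insert not_prime Rep_cf_in_center[of x] nz;
        auto simp: Rep_cf_times center_commute)
  show "1 * x = x"
    by (rule cf_eqI) (cases "prime_ring TYPE('a)"; insert not_prime nz;
        auto simp: Rep_cf_times Rep_cf_one)
  show "(x + y) * z = x * z + y * z"
    by (rule cf_eqI) (cases "prime_ring TYPE('a)"; insert not_prime nz;
        auto simp: Rep_cf_times Rep_cf_plus algebra_simps)
  show "(0::'a center_field) \<noteq> 1"
    using Rep_cf_zero Rep_cf_one nz by metis
  show "x \<noteq> 0 \<Longrightarrow> inverse x * x = 1"
  proof -
    assume "x \<noteq> 0"
    then have x0: "Rep_cf x \<noteq> 0" using Rep_cf_zero cf_eqI by metis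
    show ?thesis
      by (rule cf_eqI) (cases "prime_ring TYPE('a)";
          insert not_prime nz x0 central_inverse(2)[OF _ Rep_cf_in_center x0];
          auto simp: Rep_cf_times Rep_cf_inverse_eq Rep_cf_one)
  qed
  show "divide x y = x * inverse y"
    by (simp add: divide_center_field_def)
  show "inverse (0::'a center_field) = 0"
    by (rule cf_eqI) (auto simp: Rep_cf_inverse_eq Rep_cf_zero central_inverse_def)
qed

end

section \<open>Skolem-Noether for finite-dimensional central prime algebras\<close>

lemma sum_fun_apply: "(sum f A) x = (\<Sum>a\<in>A. f a x)"
  by (induction A rule: infinite_finite_induct) simp_all

lemma (in vector_space) nontrivial_relation_if_card_gt:
  fixes g :: "'i \<Rightarrow> 'b"
  assumes "finite I" and "finite T" and "card T < card I"
    and "\<And>i. i \<in> I \<Longrightarrow> g i \<in> span T"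
  shows "\<exists>l. (\<exists>i\<in>I. l i \<noteq> 0) \<and> (\<Sum>i\<in>I. scale (l i) (g i)) = 0"
proof (cases "inj_on g I")
  case False
  then obtain i j where ij: "i \<in> I" "j \<in> I" "i \<noteq> j" "g i = g j" by (auto simp: inj_on_def)
  define l :: "'i \<Rightarrow> 'a" where "l k = (if k = i then 1 else if k = j then -1 else 0)" for k
  have "(\<Sum>k\<in>I. scale (l k) (g k)) = (\<Sum>k\<in>{i, j}. scale (l k) (g k))"
    by (rule sum.mono_neutral_right) (use ij assms(1) in \<open>auto simp: l_def\<close>)
  also have "\<dots> = 0" using ij by (simp add: l_def)
  finally show ?thesis using ij by (auto simp: l_def intro!: exI[of _ l])
next
  case True
  have "dependent (g ` I)"
  proof (rule ccontr)
    assume "independent (g ` I)"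
    then have "card (g ` I) \<le> card T" using independent_span_bound[OF assms(2)] assms(4) by blast
    then show False using card_image[OF True] assms(3) by simp
  qed
  then obtain u v where u: "(\<Sum>x\<in>g ` I. scale (u x) x) = 0" "v \<in> g ` I" "u v \<noteq> 0"
    using dependent_finite[of "g ` I"] assms(1) by auto
  have "(\<Sum>i\<in>I. scale (u (g i)) (g i)) = 0"
    using u(1) by (simp add: sum.reindex[OF True])
  moreover obtain i where "i \<in> I" "g i = v" using u(2) by blast
  ultimately show ?thesis using u(3) by (intro exI[of _ "\<lambda>i. u (g i)"]) auto
qed

lemma (in vector_space) vector_space_fun: "vector_space (\<lambda>c (f :: 'x \<Rightarrow> 'b) y. scale c (f y))"
  by unfold_locales (auto simp: fun_eq_iff plus_fun_def scale_right_distrib scale_left_distrib)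

lemma (in finite_dimensional_vector_space) restriction_in_span:
  "(\<lambda>y. if y \<in> Basis then f y else 0) \<in> module.span (\<lambda>c g y. scale c (g y))
     ((\<lambda>(b, w) y. if y = b then w else 0) ` (Basis \<times> Basis))"
proof -
  interpret FS: vector_space "\<lambda>c (f::'b \<Rightarrow> 'b) y. scale c (f y)" by (rule vector_space_fun)
  define \<delta> where "\<delta> b w = (\<lambda>y. if y = b then w else 0)" for b w :: 'b
  have E: "(\<lambda>(b, w) y. if y = b then w else 0) ` (Basis \<times> Basis) = (\<lambda>(b, w). \<delta> b w) ` (Basis \<times> Basis)"
    by (simp add: \<delta>_def)
  have \<delta>_span: "\<delta> b w \<in> FS.span ((\<lambda>(b, w). \<delta> b w) ` (Basis \<times> Basis))" if "b \<in> Basis" for b w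
  proof -
    obtain u where w: "w = (\<Sum>v\<in>Basis. scale (u v) v)"
      using span_finite[OF finite_Basis] span_Basis by blast
    have "\<delta> b w = (\<Sum>v\<in>Basis. (\<lambda>y. scale (u v) (\<delta> b v y)))"
      by (auto simp: fun_eq_iff sum_fun_apply \<delta>_def w)
    also have "\<dots> \<in> FS.span ((\<lambda>(b, w). \<delta> b w) ` (Basis \<times> Basis))"
      using that by (intro FS.span_sum FS.span_scale FS.span_base) auto
    finally show ?thesis .
  qed
  have "(\<lambda>y. if y \<in> Basis then f y else 0) = (\<Sum>b\<in>Basis. \<delta> b (f b))"
    using finite_Basis by (auto simp: fun_eq_iff sum_fun_apply \<delta>_def)
  then show ?thesis unfolding E by (simp add: FS.span_sum \<delta>_span)
qed

text \<open>Linear maps are determined by their restrictions to the basis, which lie in a space spanned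
  by card Basis * card Basis maps.\<close>

lemma (in finite_dimensional_vector_space) linear_maps_dependent:
  fixes T :: "'i \<Rightarrow> 'b \<Rightarrow> 'b"
  assumes "finite I" and "card Basis * card Basis < card I"
    and add: "\<And>i x y. T i (x + y) = T i x + T i y"
    and hom: "\<And>i c x. T i (scale c x) = scale c (T i x)"
  shows "\<exists>l. (\<exists>i\<in>I. l i \<noteq> 0) \<and> (\<forall>y. (\<Sum>i\<in>I. scale (l i) (T i y)) = 0)"
proof -
  interpret FS: vector_space "\<lambda>c (f::'b \<Rightarrow> 'b) y. scale c (f y)" by (rule vector_space_fun)
  define restr where "restr f = (\<lambda>y. if y \<in> Basis then f y else 0)" for f :: "'b \<Rightarrow> 'b"
  let ?E = "(\<lambda>(b, w) y. if y = b then w else 0) ` (Basis \<times> Basis)"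
  have "card ?E \<le> card Basis * card Basis"
    using card_image_le[of "Basis \<times> Basis"] finite_Basis by (simp add: card_cartesian_product)
  then obtain l where l: "\<exists>i\<in>I. l i \<noteq> 0" "(\<Sum>i\<in>I. (\<lambda>y. scale (l i) (restr (T i) y))) = 0"
    using FS.nontrivial_relation_if_card_gt[of I ?E "\<lambda>i. restr (T i)"] assms(1,2)
      restriction_in_span finite_Basis unfolding restr_def by fastforce
  define R where "R y = (\<Sum>i\<in>I. scale (l i) (T i y))" for y
  have R_add: "R (x + y) = R x + R y" for x y
    by (simp add: R_def add scale_right_distrib sum.distrib)
  have R_hom: "R (scale c x) = scale c (R x)" for c x
    by (simp add: R_def hom scale_sum_right mult.commute)
  have "subspace {y. R y = 0}"
    using R_add R_hom R_hom[of 0 0] by (intro subspaceI) simp_all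
  moreover have "Basis \<subseteq> {y. R y = 0}"
  proof
    fix b assume "b \<in> Basis"
    then show "b \<in> {y. R y = 0}"
      using fun_cong[OF l(2), of b] by (simp add: sum_fun_apply R_def restr_def)
  qed
  ultimately have "R y = 0" for y using span_Basis span_minimal by blast
  with l(1) show ?thesis by (auto simp: R_def)
qed

definition left_ideal :: "'a::ring_1 set \<Rightarrow> bool" where
  "left_ideal L \<longleftrightarrow> 0 \<in> L \<and> (\<forall>x\<in>L. \<forall>y\<in>L. x + y \<in> L) \<and> (\<forall>r. \<forall>x\<in>L. r * x \<in> L)"

definition two_sided_ideal :: "'a::ring_1 set \<Rightarrow> bool" where
  "two_sided_ideal J \<longleftrightarrow> left_ideal J \<and> (\<forall>r. \<forall>x\<in>J. x * r \<in> J)"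

lemma left_ideal_diff:
  assumes "left_ideal L" and "x \<in> L" and "y \<in> L"
  shows "x - y \<in> L"
proof -
  have "x + (- 1) * y \<in> L" using assms unfolding left_ideal_def by blast
  then show ?thesis by simp
qed

lemma left_ideal_image_mult_right:
  assumes "left_ideal L"
  shows "left_ideal ((\<lambda>l. l * a) ` L)"
  unfolding left_ideal_def
proof (intro conjI ballI allI)
  show "0 \<in> (\<lambda>l. l * a) ` L"
    using assms image_eqI[of 0 "\<lambda>l. l * a" 0] by (simp add: left_ideal_def)
  fix x y r
  assume "x \<in> (\<lambda>l. l * a) ` L"
  then obtain l where l: "l \<in> L" "x = l * a" by blast
  show "r * x \<in> (\<lambda>l. l * a) ` L"
    using assms l image_eqI[of "r * x" "\<lambda>l. l * a" "r * l"] by (simp add: left_ideal_def mult.assoc)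
  assume "y \<in> (\<lambda>l. l * a) ` L"
  then obtain k where k: "k \<in> L" "y = k * a" by blast
  show "x + y \<in> (\<lambda>l. l * a) ` L"
    using assms l k image_eqI[of "x + y" "\<lambda>l. l * a" "l + k"]
    by (simp add: left_ideal_def distrib_right)
qed

lemma left_ideal_right_annihilator:
  assumes "left_ideal L"
  shows "left_ideal {x \<in> L. x * a = 0}"
  using assms unfolding left_ideal_def
  by (simp add: distrib_right mult.assoc)

lemma left_ideal_UNIV: "left_ideal UNIV"
  by (simp add: left_ideal_def)

lemma idempotent_extend:
  fixes e g :: "'a::ring_1"
  assumes e: "e * e = e" and g: "g * g = g" "g * e = 0" "g \<noteq> 0"
  defines "h \<equiv> e + g - e * g"
  shows "h * h = h" and "range (\<lambda>q. q * e) \<subset> range (\<lambda>q. q * h)"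
proof -
  have r1: "x * g * e = 0" and r2: "x * e * e = x * e" and r3: "x * g * g = x * g" for x
    using e g by (simp_all add: mult.assoc)
  note simps = ring_distribs mult.assoc[symmetric] r1 r2 r3 e g
  have hh: "h * h = h" and eh: "e * h = e" and he: "h * e = e"
    unfolding h_def by (simp_all add: simps)
  then show "h * h = h" by blast
  have "q * e = (q * e) * h" for q using eh by (simp add: mult.assoc)
  then have sub: "range (\<lambda>q. q * e) \<subseteq> range (\<lambda>q. q * h)" by blast
  have "h \<notin> range (\<lambda>q. q * e)"
  proof
    assume "h \<in> range (\<lambda>q. q * e)"
    then obtain q where "h = q * e" by blast
    then have "h * e = h" using e by (simp add: mult.assoc)
    then have "e + g - e * g = e" using he by (simp add: h_def)
    then have "g = e * g" by (simp add: algebra_simps)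
    then have "g = g * (e * g)" using g(1) by simp
    also have "\<dots> = 0" using g(2) by (simp add: mult.assoc[symmetric])
    finally show False using g(3) by simp
  qed
  moreover have "h \<in> range (\<lambda>q. q * h)" using rangeI[of "\<lambda>q. q * h" 1] by simp
  ultimately show "range (\<lambda>q. q * e) \<subset> range (\<lambda>q. q * h)" using sub by blast
qed

locale central_prime_algebra = finite_dimensional_vector_space scale Basis
  for scale :: "'f::field \<Rightarrow> 'v::ring_1 \<Rightarrow> 'v" (infixr \<open>*%\<close> 75) and Basis :: "'v set" +
  assumes scale_mult_left: "c *% (x * y) = (c *% x) * y"
    and scale_mult_right: "c *% (x * y) = x * (c *% y)"
    and prime_algebra: "(\<And>r. a * r * (b::'v) = 0) \<Longrightarrow> a = 0 \<or> b = 0"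
    and center_scalar: "z \<in> center \<Longrightarrow> \<exists>c. z = c *% 1"
begin

lemma scale_eq_mult: "c *% x = (c *% 1) * x"
  using scale_mult_left[of c 1 x] by simp

lemma left_ideal_subspace: "left_ideal (L :: 'v set) \<Longrightarrow> subspace L"
  unfolding left_ideal_def subspace_def by (metis scale_eq_mult)

lemma minimal_left_ideal_idempotent:
  fixes L :: "'v set"
  assumes L: "left_ideal L" and y: "y \<in> L" "y \<noteq> 0"
    and minimal: "\<And>L'. left_ideal L' \<Longrightarrow> L' \<subseteq> L \<Longrightarrow> \<exists>x\<in>L'. x \<noteq> 0 \<Longrightarrow> L' = L"
  shows "\<exists>e\<in>L. e * e = e \<and> e \<noteq> 0"
proof -
  obtain q where "y * q * y \<noteq> 0" using prime_algebra[of y y] y by auto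
  define a where "a = q * y"
  have a: "a \<in> L" using L y unfolding left_ideal_def a_def by blast
  have ya: "y * a \<noteq> 0" using \<open>y * q * y \<noteq> 0\<close> by (simp add: a_def mult.assoc)
  have "(\<lambda>l. l * a) ` L = L"
  proof (rule minimal)
    show "left_ideal ((\<lambda>l. l * a) ` L)" using L by (rule left_ideal_image_mult_right)
    show "(\<lambda>l. l * a) ` L \<subseteq> L"
      using L y unfolding left_ideal_def a_def by (auto simp: mult.assoc[symmetric])
    show "\<exists>x\<in>(\<lambda>l. l * a) ` L. x \<noteq> 0" using y ya by blast
  qed
  then obtain e where e: "e \<in> L" "a = e * a" using a by (metis imageE)
  have annihilated: "x = 0" if "x \<in> L" "x * a = 0" for x
  proof (rule ccontr)
    assume "x \<noteq> 0"
    then have "{x \<in> L. x * a = 0} = L"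
      using that by (intro minimal left_ideal_right_annihilator L) auto
    then show False using y ya by blast
  qed
  have "e * e - e \<in> L" using L e(1) by (simp add: left_ideal_diff left_ideal_def)
  moreover have "(e * e - e) * a = 0" using e(2) by (simp add: algebra_simps mult.assoc[symmetric])
  ultimately have "e * e - e = 0" by (rule annihilated)
  then have "e * e = e" by simp
  moreover have "e \<noteq> 0" using e ya by auto
  ultimately show ?thesis using e(1) by blast
qed

lemma left_ideal_idempotent:
  fixes L :: "'v set"
  assumes "left_ideal L" and "x \<in> L" and "x \<noteq> 0"
  shows "\<exists>e\<in>L. e * e = e \<and> e \<noteq> 0"
proof -
  define S where "S = {L'. left_ideal L' \<and> L' \<subseteq> L \<and> (\<exists>x\<in>L'. x \<noteq> 0)}"
  have "L \<in> S" using assms by (auto simp: S_def)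
  then obtain L0 where L0: "L0 \<in> S" and least: "\<And>L'. L' \<in> S \<Longrightarrow> dim L0 \<le> dim L'"
    using ex_has_least_nat[of "\<lambda>L. L \<in> S" L dim] by blast
  have "L' = L0" if "left_ideal L'" "L' \<subseteq> L0" "\<exists>x\<in>L'. x \<noteq> 0" for L'
  proof (rule subspace_dim_equal)
    show "subspace L'" "subspace L0" using that L0 by (auto simp: S_def left_ideal_subspace)
    show "dim L0 \<le> dim L'" using that L0 by (intro least) (auto simp: S_def)
  qed fact
  moreover obtain y where "y \<in> L0" "y \<noteq> 0" using L0 by (auto simp: S_def)
  ultimately obtain e where "e \<in> L0" "e * e = e" "e \<noteq> 0"
    using minimal_left_ideal_idempotent L0 by (metis (no_types, lifting) S_def mem_Collect_eq)
  then show ?thesis using L0 by (auto simp: S_def)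
qed

text \<open>Prime finite-dimensional algebras are simple: an idempotent e of J whose left ideal A e has
  maximal dimension must be 1, since otherwise an idempotent of the nonzero left ideal J (1 - e)
  would enlarge it.\<close>

lemma one_in_two_sided_ideal:
  fixes J :: "'v set"
  assumes J: "two_sided_ideal J" and x: "x \<in> J" "x \<noteq> 0"
  shows "1 \<in> J"
proof (rule ccontr)
  assume "1 \<notin> J"
  have Jl: "left_ideal J" and Jr: "\<And>r x. x \<in> J \<Longrightarrow> x * r \<in> J"
    using J by (auto simp: two_sided_ideal_def)
  define D where "D e = dim (range (\<lambda>q. q * e))" for e :: 'v
  have "0 \<in> J \<and> (0::'v) * 0 = 0" using Jl by (simp add: left_ideal_def)
  moreover have "\<forall>e. e \<in> J \<and> e * e = e \<longrightarrow> D e < Suc dimension"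
    using dim_subset_UNIV by (simp add: D_def le_imp_less_Suc)
  ultimately obtain e where e: "e \<in> J" "e * e = e"
    and emax: "\<And>e'. e' \<in> J \<Longrightarrow> e' * e' = e' \<Longrightarrow> D e' \<le> D e"
    using Lattices_Big.ex_has_greatest_nat[of "\<lambda>e. e \<in> J \<and> e * e = e" 0 D "Suc dimension"]
    by blast
  have "e \<noteq> 1" using e \<open>1 \<notin> J\<close> by auto
  then obtain r where r: "x * r * (1 - e) \<noteq> 0" using prime_algebra[of x "1 - e"] x by auto
  have "left_ideal ((\<lambda>j. j * (1 - e)) ` J)" using Jl by (rule left_ideal_image_mult_right)
  moreover have "x * r * (1 - e) \<in> (\<lambda>j. j * (1 - e)) ` J" using Jr[OF x(1)] by blast
  ultimately obtain g where g: "g \<in> (\<lambda>j. j * (1 - e)) ` J" "g * g = g" "g \<noteq> 0"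
    using left_ideal_idempotent r by blast
  then obtain j where j: "j \<in> J" "g = j * (1 - e)" by blast
  have "g * e = j * (e - e * e)" unfolding j(2) by (simp add: algebra_simps mult.assoc)
  then have "g * e = 0" using e(2) by simp
  define h where "h = e + g - e * g"
  have "h \<in> J" unfolding h_def using e(1) j Jl Jr by (simp add: left_ideal_diff left_ideal_def)
  moreover have "h * h = h" and sub: "range (\<lambda>q. q * e) \<subset> range (\<lambda>q. q * h)"
    using idempotent_extend[OF e(2) g(2) \<open>g * e = 0\<close> g(3)] by (simp_all add: h_def)
  ultimately have "D h \<le> D e" by (intro emax)
  moreover have "D e < D h"
    using sub left_ideal_subspace[OF left_ideal_image_mult_right[OF left_ideal_UNIV]]
    unfolding D_def by (metis dim_psubset span_eq_iff)
  ultimately show False by simp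
qed


lemma proportional_if_twisted_commute:
  fixes c d :: 'v
  assumes d: "d \<noteq> 0" and cd: "\<And>y. c * y * d = d * y * c"
  shows "\<exists>f. c = f *% d"
proof -
  define J where "J = {w. \<exists>u. \<forall>r. u * r * d = w * r * c}"
  have "two_sided_ideal J" unfolding two_sided_ideal_def left_ideal_def J_def
  proof (intro conjI ballI allI; (elim CollectE exE)?; intro CollectI)
    show "\<exists>u. \<forall>r. u * r * d = 0 * r * c" by (auto intro: exI[of _ 0])
  next
    fix x y u1 u2 assume "\<forall>r. u1 * r * d = x * r * c" "\<forall>r. u2 * r * d = y * r * c"
    then show "\<exists>u. \<forall>r. u * r * d = (x + y) * r * c"
      by (auto simp: distrib_right intro!: exI[of _ "u1 + u2"])
  next
    fix r x u assume "\<forall>r. u * r * d = x * r * c"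
    then show "\<exists>u. \<forall>s. u * s * d = r * x * s * c"
      by (auto simp: mult.assoc intro!: exI[of _ "r * u"])
  next
    fix r x u assume "\<forall>r. u * r * d = x * r * c"
    then show "\<exists>u. \<forall>s. u * s * d = x * r * s * c"
      by (metis mult.assoc)
  qed
  moreover have "d \<in> J" unfolding J_def using cd by blast
  ultimately have "1 \<in> J" using d by (rule one_in_two_sided_ideal)
  then obtain z where z: "\<And>r. z * r * d = r * c" unfolding J_def by auto
  have "z \<in> center" unfolding center_def
  proof (intro CollectI allI)
    fix x
    have "(z * x - x * z) * r * d = 0" for r
      using z[of "x * r"] z[of r] by (simp add: algebra_simps mult.assoc)
    then have "z * x - x * z = 0" using prime_algebra d by blast
    then show "z * x = x * z" by simp
  qed
  then obtain f where f: "z = f *% 1" using center_scalar by blast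
  have "c = z * 1 * d" using z[of 1] by simp
  also have "\<dots> = f *% d" using f scale_eq_mult[of f d] by simp
  finally show ?thesis by blast
qed

lemma sandwich_sum_twisted_commute_eq_0:
  assumes B: "finite B" "independent B" and m: "m \<in> B"
    and sum_0: "\<And>y. (\<Sum>b\<in>B. b * y * c b) = 0"
    and twisted: "\<And>b y. b \<in> B \<Longrightarrow> c b * y * c m = c m * y * c b"
  shows "c m = 0"
proof (rule ccontr)
  define d where "d = c m"
  assume "c m \<noteq> 0"
  then have d: "d \<noteq> 0" by (simp add: d_def)
  have "\<forall>b\<in>B. \<exists>f. c b = f *% d"
    using proportional_if_twisted_commute[OF d] twisted by (simp add: d_def)
  then obtain f where f: "\<And>b. b \<in> B \<Longrightarrow> c b = f b *% d" by metis
  have "(\<Sum>b\<in>B. f b *% b) * y * d = 0" for y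
  proof -
    have "(\<Sum>b\<in>B. f b *% b) * y * d = (\<Sum>b\<in>B. b * y * (f b *% d))"
      by (simp add: sum_distrib_right scale_mult_left[symmetric] scale_mult_right mult.assoc)
    also have "\<dots> = 0" using sum_0[of y] f by (simp cong: sum.cong)
    finally show ?thesis .
  qed
  then have "(\<Sum>b\<in>B. f b *% b) = 0" using prime_algebra d by blast
  then have "f m = 0" using independentD[OF B(2) B(1) subset_refl] m by blast
  then show False using f[OF m] d by (simp add: d_def)
qed

text \<open>For a basis B this says that the natural map from A \<otimes> A^op to End(A) is injective.\<close>

lemma sandwich_sum_eq_0:
  assumes "finite B" and "independent B" and "\<And>y. (\<Sum>b\<in>B. b * y * c b) = 0"
  shows "\<forall>b\<in>B. c b = 0"
  using assms
proof (induction B arbitrary: c rule: finite_induct)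
  case empty
  then show ?case by simp
next
  case (insert m B c)
  have indep: "independent B" using insert.prems(1) independent_mono by blast
  have twisted: "c b * y * c m = c m * y * c b" if "b \<in> insert m B" for b y
  proof -
    define c' where "c' b = c b * y * c m - c m * y * c b" for b
    have "(\<Sum>b\<in>insert m B. b * x * c' b) =
        (\<Sum>b\<in>insert m B. b * x * c b) * (y * c m) - (\<Sum>b\<in>insert m B. b * (x * c m * y) * c b)"
      for x by (simp add: c'_def right_diff_distrib sum_subtractf sum_distrib_right mult.assoc
          del: sum.insert)
    then have "(\<Sum>b\<in>insert m B. b * x * c' b) = 0" for x
      by (simp only: insert.prems(2)) simp
    then have "(\<Sum>b\<in>B. b * x * c' b) = 0" for x
      using insert.hyps by (simp add: c'_def)
    then have "\<forall>b\<in>B. c' b = 0" by (rule insert.IH[OF indep])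
    then show ?thesis using that by (auto simp: c'_def)
  qed
  have "c m = 0"
    using sandwich_sum_twisted_commute_eq_0[OF _ insert.prems(1) _ insert.prems(2) twisted]
      insert.hyps by blast
  moreover have "\<forall>b\<in>B. c b = 0"
    using insert.IH[OF indep] insert.prems(2) insert.hyps \<open>c m = 0\<close> by simp
  ultimately show ?case by simp
qed

text \<open>The n * n + 1 maps \<Phi> and y \<mapsto> p y q, for p and q in the basis, are linearly dependent.\<close>

lemma sandwich_relation:
  assumes add: "\<And>x y. \<Phi> (x + y) = \<Phi> x + \<Phi> y" and hom: "\<And>c x. \<Phi> (c *% x) = c *% \<Phi> x"
  obtains \<mu> c where "\<mu> \<noteq> 0 \<or> (\<exists>p\<in>Basis. c p \<noteq> 0)"
    and "\<And>y. \<mu> *% \<Phi> y + (\<Sum>p\<in>Basis. p * y * c p) = 0"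
proof -
  define I where "I = insert None (Some ` (Basis \<times> Basis))"
  define T where "T i = (case i of None \<Rightarrow> \<Phi> | Some pq \<Rightarrow> (\<lambda>y. fst pq * y * snd pq))" for i
  have T_add: "T i (x + y) = T i x + T i y" for i x y
    by (cases i) (auto simp: T_def add algebra_simps)
  have T_hom: "T i (c *% x) = c *% T i x" for i c x
    by (cases i) (auto simp: T_def hom scale_mult_left[symmetric] scale_mult_right[symmetric]
        mult.assoc)
  have "finite I" using finite_Basis by (simp add: I_def)
  moreover have "card Basis * card Basis < card I"
    unfolding I_def using finite_Basis by (simp add: card_image card_cartesian_product)
  ultimately obtain l where l: "\<exists>i\<in>I. l i \<noteq> 0" "\<And>y. (\<Sum>i\<in>I. l i *% T i y) = 0"
    using linear_maps_dependent[of I T, OF _ _ T_add T_hom] by blast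
  define c where "c p = (\<Sum>q\<in>Basis. l (Some (p, q)) *% q)" for p
  have "l None *% \<Phi> y + (\<Sum>p\<in>Basis. p * y * c p) = 0" for y
  proof -
    have "(\<Sum>i\<in>Some ` (Basis \<times> Basis). l i *% T i y) =
        (\<Sum>pq\<in>Basis \<times> Basis. l (Some pq) *% (fst pq * y * snd pq))"
      by (simp add: sum.reindex T_def)
    also have "\<dots> = (\<Sum>p\<in>Basis. p * y * c p)"
      by (simp add: sum.cartesian_product split_beta c_def sum_distrib_left scale_mult_right)
    finally show ?thesis using l(2)[of y] finite_Basis by (simp add: I_def T_def)
  qed
  moreover have "l None \<noteq> 0 \<or> (\<exists>p\<in>Basis. c p \<noteq> 0)"
  proof (rule ccontr)
    assume "\<not> ?thesis"
    then have "l None = 0" and "\<forall>p\<in>Basis. c p = 0" by auto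
    then have "l (Some (p, q)) = 0" if "p \<in> Basis" "q \<in> Basis" for p q
      using independentD[OF independent_Basis finite_Basis subset_refl, of "\<lambda>q. l (Some (p, q))"]
        that by (simp add: c_def)
    then show False using l(1) \<open>l None = 0\<close> by (auto simp: I_def)
  qed
  ultimately show ?thesis using that by blast
qed

lemma linear_eq_sandwich_sum:
  assumes add: "\<And>x y. \<Phi> (x + y) = \<Phi> x + \<Phi> y" and hom: "\<And>c x. \<Phi> (c *% x) = c *% \<Phi> x"
  shows "\<exists>c. \<forall>y. \<Phi> y = (\<Sum>p\<in>Basis. p * y * c p)"
proof -
  obtain \<mu> c where nontrivial: "\<mu> \<noteq> 0 \<or> (\<exists>p\<in>Basis. c p \<noteq> 0)"
    and relation: "\<And>y. \<mu> *% \<Phi> y + (\<Sum>p\<in>Basis. p * y * c p) = 0"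
    using sandwich_relation[OF add hom] by blast
  have "\<mu> \<noteq> 0"
  proof
    assume "\<mu> = 0"
    then have "\<forall>p\<in>Basis. c p = 0"
      using relation by (intro sandwich_sum_eq_0[OF finite_Basis independent_Basis]) simp
    with nontrivial \<open>\<mu> = 0\<close> show False by blast
  qed
  have "\<Phi> y = (\<Sum>p\<in>Basis. p * y * ((- inverse \<mu>) *% c p))" for y
  proof -
    have "\<mu> *% \<Phi> y = - (\<Sum>p\<in>Basis. p * y * c p)"
      using relation[of y] by (simp add: eq_neg_iff_add_eq_0)
    have "\<Phi> y = inverse \<mu> *% (\<mu> *% \<Phi> y)" using \<open>\<mu> \<noteq> 0\<close> by simp
    also have "\<dots> = inverse \<mu> *% - (\<Sum>p\<in>Basis. p * y * c p)"
      using \<open>\<mu> *% \<Phi> y = _\<close> by simp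
    finally show ?thesis by (simp add: scale_sum_right scale_mult_right sum_negf)
  qed
  then show ?thesis by (intro exI[of _ "\<lambda>p. (- inverse \<mu>) *% c p"]) simp
qed

theorem skolem_noether:
  assumes add: "\<And>x y. \<Phi> (x + y) = \<Phi> x + \<Phi> y" and hom: "\<And>c x. \<Phi> (c *% x) = c *% \<Phi> x"
    and mult: "\<And>x y. \<Phi> (x * y) = \<Phi> x * \<Phi> y" and one: "\<Phi> 1 = 1"
  shows "\<exists>c. c \<noteq> 0 \<and> (\<forall>y. y * c = c * \<Phi> y)"
proof -
  obtain c where c: "\<And>y. \<Phi> y = (\<Sum>p\<in>Basis. p * y * c p)"
    using linear_eq_sandwich_sum[OF add hom] by blast
  have "\<forall>p\<in>Basis. y * c p - c p * \<Phi> y = 0" for y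
  proof (rule sandwich_sum_eq_0[OF finite_Basis independent_Basis])
    fix x
    have "(\<Sum>p\<in>Basis. p * x * (y * c p - c p * \<Phi> y)) = \<Phi> (x * y) - \<Phi> x * \<Phi> y"
      by (simp add: c right_diff_distrib sum_subtractf sum_distrib_right mult.assoc)
    then show "(\<Sum>p\<in>Basis. p * x * (y * c p - c p * \<Phi> y)) = 0" by (simp add: mult)
  qed
  moreover obtain p where "p \<in> Basis" "c p \<noteq> 0"
  proof -
    have "\<not> (\<forall>p\<in>Basis. c p = 0)"
    proof
      assume "\<forall>p\<in>Basis. c p = 0"
      then have "\<Phi> 1 = 0" using c[of 1] by simp
      with one show False by simp
    qed
    with that show ?thesis by blast
  qed
  ultimately show ?thesis by auto
qed

end

section \<open>Elements of Oz(A) are inner\<close>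

lemma OzD:
  assumes "\<phi> \<in> Oz \<iota>"
  shows "bij \<phi>" and "\<phi> (x + y) = \<phi> x + \<phi> y" and "\<phi> (x * y) = \<phi> x * \<phi> y"
    and "\<phi> 1 = 1" and "z \<in> center \<Longrightarrow> \<phi> z = z"
  using assms by (auto simp: Oz_def)

lemma Oz_zero: "\<phi> \<in> Oz \<iota> \<Longrightarrow> \<phi> 0 = 0"
  using OzD(2)[of \<phi> \<iota> 0 0] by simp

lemma Oz_sum: "\<phi> \<in> Oz \<iota> \<Longrightarrow> \<phi> (sum f A) = (\<Sum>x\<in>A. \<phi> (f x))"
  by (induction A rule: infinite_finite_induct) (simp_all add: Oz_zero OzD(2))

lemma inv_in_Oz:
  assumes "\<phi> \<in> Oz \<iota>"
  shows "inv \<phi> \<in> Oz \<iota>"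
proof -
  note Oz = OzD[OF assms]
  have \<phi>_inv: "\<phi> (inv \<phi> x) = x" and inv_\<phi>: "inv \<phi> (\<phi> x) = x" for x
    using Oz(1) by (simp_all add: bij_is_surj surj_f_inv_f bij_is_inj inv_f_f)
  have "inv \<phi> (x + y) = inv \<phi> x + inv \<phi> y" for x y by (metis \<phi>_inv inv_\<phi> Oz(2))
  moreover have "inv \<phi> (x * y) = inv \<phi> x * inv \<phi> y" for x y by (metis \<phi>_inv inv_\<phi> Oz(3))
  moreover have "inv \<phi> 1 = 1" by (metis inv_\<phi> Oz(4))
  moreover have "inv \<phi> (\<iota> c * x) = \<iota> c * inv \<phi> x" for c x
  proof -
    have "\<forall>c x. \<phi> (\<iota> c * x) = \<iota> c * \<phi> x" using assms unfolding Oz_def by blast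
    then have "\<phi> (\<iota> c * inv \<phi> x) = \<iota> c * x" by (simp add: \<phi>_inv)
    then show ?thesis by (metis inv_\<phi>)
  qed
  moreover have "inv \<phi> z = z" if "z \<in> center" for z using Oz(5)[OF that] by (metis inv_\<phi>)
  moreover have "bij (inv \<phi>)" using Oz(1) by (rule bij_imp_bij_inv)
  ultimately show ?thesis by (simp add: Oz_def)
qed

definition loc_map :: "('a::ring_1 \<Rightarrow> 'a) \<Rightarrow> 'a central_loc \<Rightarrow> 'a central_loc" where
  "loc_map \<phi> q = (SOME q'. \<exists>a s. s \<in> regular_center \<and> q = cfrac a s \<and> q' = cfrac (\<phi> a) s)"

lemma loc_map_cfrac:
  assumes \<phi>: "\<phi> \<in> Oz \<iota>" and s: "s \<in> regular_center"
  shows "loc_map \<phi> (cfrac a s) = cfrac (\<phi> a) s"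
proof -
  have well_defined: "cfrac (\<phi> b) t = cfrac (\<phi> a) s"
    if t: "t \<in> regular_center" and eq: "cfrac a s = cfrac b t" for b t
  proof -
    have "\<phi> (a * t) = \<phi> (b * s)" using eq s t by (simp add: cfrac_eq_iff)
    then have "\<phi> a * t = \<phi> b * s"
      using OzD[OF \<phi>] regular_center_in_center[OF s] regular_center_in_center[OF t] by simp
    then show ?thesis using s t by (simp add: cfrac_eq_iff)
  qed
  have "\<exists>q'. \<exists>b t. t \<in> regular_center \<and> cfrac a s = cfrac b t \<and> q' = cfrac (\<phi> b) t"
    using s by blast
  from someI_ex[OF this] obtain b t where
    "t \<in> regular_center" "cfrac a s = cfrac b t" "loc_map \<phi> (cfrac a s) = cfrac (\<phi> b) t"
    unfolding loc_map_def by blast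
  with well_defined show ?thesis by simp
qed

context
  fixes \<iota> :: "'k::field \<Rightarrow> 'a::ring_1" and \<phi> :: "'a \<Rightarrow> 'a"
  assumes \<phi>: "\<phi> \<in> Oz \<iota>"
begin

lemma loc_map_add: "loc_map \<phi> (x + y) = loc_map \<phi> x + loc_map \<phi> y"
proof -
  obtain a s where x: "x = cfrac a s" "s \<in> regular_center" by (cases x)
  obtain b t where y: "y = cfrac b t" "t \<in> regular_center" by (cases y)
  show ?thesis
    using x y regular_center_in_center[OF x(2)] regular_center_in_center[OF y(2)]
    by (simp add: cfrac_add regular_center_mult OzD[OF \<phi>] loc_map_cfrac[OF \<phi>])
qed

lemma loc_map_mult: "loc_map \<phi> (x * y) = loc_map \<phi> x * loc_map \<phi> y"
proof -
  obtain a s where x: "x = cfrac a s" "s \<in> regular_center" by (cases x)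
  obtain b t where y: "y = cfrac b t" "t \<in> regular_center" by (cases y)
  show ?thesis
    using x y by (simp add: cfrac_mult regular_center_mult OzD[OF \<phi>] loc_map_cfrac[OF \<phi>])
qed

lemma loc_map_one: "loc_map \<phi> 1 = 1"
  by (simp add: one_eq_cfrac one_in_regular_center OzD[OF \<phi>] loc_map_cfrac[OF \<phi>])

end

definition cscale :: "'a::ring_1 center_field \<Rightarrow> 'a central_loc \<Rightarrow> 'a central_loc" where
  "cscale c q = Rep_cf c * q"

context
  assumes prime: "prime_ring TYPE('a::ring_1)"
begin

lemma vector_space_cscale: "vector_space (cscale :: 'a center_field \<Rightarrow> 'a central_loc \<Rightarrow> _)"
  by unfold_locales (simp_all add: cscale_def Rep_cf_plus Rep_cf_times Rep_cf_one prime
      algebra_simps)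

lemma finite_span_cscale:
  assumes "finite_over_center TYPE('a)"
  obtains S :: "'a set" where "finite S" and "module.span cscale (to_loc ` S) = UNIV"
proof -
  interpret V: vector_space "cscale :: 'a center_field \<Rightarrow> 'a central_loc \<Rightarrow> _"
    by (rule vector_space_cscale)
  obtain S :: "'a set" where S: "finite S"
    "\<And>x. \<exists>c. (\<forall>s\<in>S. c s \<in> center) \<and> x = (\<Sum>s\<in>S. c s * s)"
    using assms unfolding finite_over_center_def by blast
  have "q \<in> V.span (to_loc ` S)" for q
  proof -
    obtain a s where q: "q = cfrac a s" "s \<in> regular_center" by (cases q)
    obtain c where c: "\<forall>x\<in>S. c x \<in> center" "a = (\<Sum>x\<in>S. c x * x)" using S(2) by blast
    have central: "cfrac 1 s * to_loc (c x) \<in> center" if "x \<in> S" for x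
      using cfrac_1_in_center[OF q(2)] to_loc_in_center c(1) that center_mult by blast
    have "q = cfrac 1 s * to_loc a"
      using q cfrac_eq_to_loc_mult[OF q(2), of a] center_commute[OF cfrac_1_in_center[OF q(2)]]
      by simp
    also have "\<dots> = (\<Sum>x\<in>S. (cfrac 1 s * to_loc (c x)) * to_loc x)"
      by (simp add: c(2) to_loc_sum to_loc_mult sum_distrib_left mult.assoc)
    also have "\<dots> = (\<Sum>x\<in>S. cscale (Abs_cf (cfrac 1 s * to_loc (c x))) (to_loc x))"
      using central by (simp add: cscale_def Abs_cf_inverse_center[OF prime])
    also have "\<dots> \<in> V.span (to_loc ` S)"
      by (intro V.span_sum V.span_scale V.span_base) auto
    finally show ?thesis .
  qed
  with S(1) that show ?thesis by blast
qed

lemma central_prime_algebra_cscale: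
  assumes "finite_over_center TYPE('a)"
  obtains B where "central_prime_algebra (cscale :: 'a center_field \<Rightarrow> 'a central_loc \<Rightarrow> _) B"
proof -
  interpret V: vector_space "cscale :: 'a center_field \<Rightarrow> 'a central_loc \<Rightarrow> _"
    by (rule vector_space_cscale)
  obtain S :: "'a set" where S: "finite S" "V.span (to_loc ` S) = UNIV"
    using finite_span_cscale[OF assms] by blast
  obtain B where B: "B \<subseteq> to_loc ` S" "V.independent B" "to_loc ` S \<subseteq> V.span B"
    using V.maximal_independent_subset[of "to_loc ` S"] by blast
  have "central_prime_algebra cscale B"
  proof unfold_locales
    show "finite B" using B(1) S(1) finite_subset by blast
    show "V.independent B" by (rule B(2))
    show "V.span B = UNIV" using V.span_mono[OF B(3)] S(2) by (auto simp: V.span_span)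
    fix c :: "'a center_field" and x y :: "'a central_loc"
    show "cscale c (x * y) = cscale c x * y" by (simp add: cscale_def mult.assoc)
    show "cscale c (x * y) = x * cscale c y"
      using center_commute[OF Rep_cf_in_center[OF prime, of c], of x]
      by (simp add: cscale_def mult.assoc[symmetric])
  next
    fix a b :: "'a central_loc"
    assume "\<And>r. a * r * b = 0"
    then show "a = 0 \<or> b = 0" by (rule prime_central_loc[OF prime])
  next
    fix z :: "'a central_loc"
    assume "z \<in> center"
    then show "\<exists>c. z = cscale c 1"
      by (intro exI[of _ "Abs_cf z"]) (simp add: cscale_def Abs_cf_inverse_center[OF prime])
  qed
  with that show ?thesis by blast
qed

lemma loc_map_cscale:
  fixes \<iota> :: "'k::field \<Rightarrow> 'a" and \<phi> :: "'a \<Rightarrow> 'a"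
  assumes \<phi>: "\<phi> \<in> Oz \<iota>"
  shows "loc_map \<phi> (cscale c x) = cscale c (loc_map \<phi> x)"
proof -
  obtain a s where x: "x = cfrac a s" "s \<in> regular_center" by (cases x)
  obtain z u where zu: "z \<in> center" "u \<in> regular_center" "Rep_cf c = cfrac z u"
    using center_central_loc_eq_cfrac[OF Rep_cf_in_center[OF prime, of c]] by blast
  show ?thesis
    using x zu by (simp add: cscale_def cfrac_mult regular_center_mult OzD[OF \<phi>] loc_map_cfrac[OF \<phi>])
qed

text \<open>Skolem-Noether in the central localization implements \<phi> by some c = a/s there; the
  central denominator s can be dropped.\<close>

theorem Oz_eq_eta:
  fixes \<iota> :: "'k::field \<Rightarrow> 'a" and \<phi> :: "'a \<Rightarrow> 'a"
  assumes fin: "finite_over_center TYPE('a)" and \<phi>: "\<phi> \<in> Oz \<iota>"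
  shows "\<exists>a. a \<noteq> 0 \<and> (\<forall>x. a * \<phi> x = x * a)"
proof -
  obtain B where "central_prime_algebra (cscale :: 'a center_field \<Rightarrow> 'a central_loc \<Rightarrow> _) B"
    using central_prime_algebra_cscale[OF fin] by blast
  then interpret central_prime_algebra "cscale :: 'a center_field \<Rightarrow> 'a central_loc \<Rightarrow> _" B .
  obtain c where c: "c \<noteq> 0" "\<And>y. y * c = c * loc_map \<phi> y"
    using skolem_noether[OF loc_map_add[OF \<phi>] loc_map_cscale[OF \<phi>] loc_map_mult[OF \<phi>]
        loc_map_one[OF \<phi>]] by blast
  obtain a s where cs: "c = cfrac a s" "s \<in> regular_center" by (cases c)
  have s_central: "to_loc s \<in> center"
    using cs(2) by (simp add: regular_center_in_center to_loc_in_center)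
  have "x * a = a * \<phi> x" for x
  proof -
    have twisted: "to_loc x * c = c * to_loc (\<phi> x)"
      using c(2)[of "to_loc x"] by (simp add: to_loc_def loc_map_cfrac[OF \<phi>] one_in_regular_center)
    have "to_loc (x * a) = to_loc x * c * to_loc s"
      using cs by (simp add: cfrac_mult_to_loc to_loc_mult mult.assoc)
    also have "\<dots> = c * to_loc (\<phi> x) * to_loc s" by (simp add: twisted)
    also have "\<dots> = c * to_loc s * to_loc (\<phi> x)"
      using center_commute[OF s_central, of "to_loc (\<phi> x)"] by (simp add: mult.assoc)
    also have "\<dots> = to_loc (a * \<phi> x)"
      using cs by (simp add: cfrac_mult_to_loc to_loc_mult)
    finally show ?thesis by (simp add: to_loc_inject)
  qed
  moreover have "a \<noteq> 0" using c(1) cs by (simp add: cfrac_eq_0_iff)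
  ultimately show ?thesis by metis
qed

end

lemma eta_element_regular_normal:
  assumes prime: "prime_ring TYPE('a::ring_1)" and \<phi>: "\<phi> \<in> Oz \<iota>"
    and a: "(a::'a) \<noteq> 0" "\<And>x. a * \<phi> x = x * a"
  shows "regular_elem a" and "normal_elem a"
proof -
  have surj: "\<exists>y. x = \<phi> y" for x using OzD(1)[OF \<phi>] by (metis bij_def surj_def)
  have "x = 0" if "a * x = 0" for x
  proof -
    have "a * r * x = 0" for r
    proof -
      obtain w where "r = \<phi> w" using surj by blast
      then have "a * r * x = w * (a * x)" using a(2)[of w] by (simp add: mult.assoc)
      then show ?thesis using that by simp
    qed
    then show ?thesis using prime_ringD[OF prime] a(1) by blast
  qed
  moreover have "x = 0" if "x * a = 0" for x
  proof -
    have "x * r * a = (x * a) * \<phi> r" for r using a(2)[of r] by (simp add: mult.assoc)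
    then have "x * r * a = 0" for r using that by simp
    then show ?thesis using prime_ringD[OF prime] a(1) by blast
  qed
  ultimately show "regular_elem a" unfolding regular_elem_def by blast
  have "a * x \<in> {x * a | x. True}" for x
  proof -
    obtain y where "x = \<phi> y" using surj by blast
    then have "a * x = y * a" using a(2)[of y] by simp
    then show ?thesis by blast
  qed
  moreover have "x * a \<in> {a * x | x. True}" for x
  proof -
    have "x * a = a * \<phi> x" using a(2)[of x] by simp
    then show ?thesis by blast
  qed
  ultimately show "normal_elem a" unfolding normal_elem_def by blast
qed

section \<open>Gradings\<close>

definition hcomp :: "('g::ab_group_add \<Rightarrow> 'a::ring_1 set) \<Rightarrow> 'a \<Rightarrow> 'g \<Rightarrow> 'a" where
  "hcomp Ag x = (THE c. finite {g. c g \<noteq> 0} \<and> (\<forall>g. c g \<in> Ag g) \<and> x = (\<Sum>g\<in>{g. c g \<noteq> 0}. c g))"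

context
  fixes \<iota> :: "'k::field \<Rightarrow> 'a::ring_1" and Ag :: "'g::ab_group_add \<Rightarrow> 'a set"
  assumes graded: "graded_algebra \<iota> Ag"
begin

lemma grade_zero: "0 \<in> Ag g"
  using graded by (simp add: graded_algebra_def)

lemma grade_add: "x \<in> Ag g \<Longrightarrow> y \<in> Ag g \<Longrightarrow> x + y \<in> Ag g"
  using graded by (simp add: graded_algebra_def)

lemma grade_mult: "x \<in> Ag g \<Longrightarrow> y \<in> Ag h \<Longrightarrow> x * y \<in> Ag (g + h)"
  using graded by (simp add: graded_algebra_def)

lemma grade_sum: "(\<And>i. i \<in> I \<Longrightarrow> u i \<in> Ag g) \<Longrightarrow> sum u I \<in> Ag g"
  by (induction I rule: infinite_finite_induct) (auto simp: grade_zero grade_add)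

lemma hcomp_ex1:
  "\<exists>!c. finite {g. c g \<noteq> 0} \<and> (\<forall>g. c g \<in> Ag g) \<and> x = (\<Sum>g\<in>{g. c g \<noteq> 0}. c g)"
  using graded by (simp add: graded_algebra_def)

lemma hcomp_finite: "finite {g. hcomp Ag x g \<noteq> 0}"
  and hcomp_in_grade: "hcomp Ag x g \<in> Ag g"
  and sum_hcomp: "(\<Sum>g\<in>{g. hcomp Ag x g \<noteq> 0}. hcomp Ag x g) = x"
  using theI'[OF hcomp_ex1[of x]] unfolding hcomp_def by auto

lemma hcomp_unique:
  assumes "finite {g. c g \<noteq> 0}" and "\<And>g. c g \<in> Ag g" and "x = (\<Sum>g\<in>{g. c g \<noteq> 0}. c g)"
  shows "hcomp Ag x = c"
  unfolding hcomp_def using assms by (intro the1_equality[OF hcomp_ex1]) auto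

lemma hcomp_sum:
  assumes "finite I" and u: "\<And>i. i \<in> I \<Longrightarrow> u i \<in> Ag (d i)"
  shows "hcomp Ag (sum u I) g = (\<Sum>i\<in>{i\<in>I. d i = g}. u i)"
proof -
  define c where "c g = (\<Sum>i\<in>{i\<in>I. d i = g}. u i)" for g
  have support: "{g. c g \<noteq> 0} \<subseteq> d ` I"
  proof
    fix g assume "g \<in> {g. c g \<noteq> 0}"
    show "g \<in> d ` I"
    proof (rule ccontr)
      assume "g \<notin> d ` I"
      then have empty: "{i\<in>I. d i = g} = {}" by auto
      have "c g = 0" unfolding c_def by (simp only: empty sum.empty)
      then show False using \<open>g \<in> {g. c g \<noteq> 0}\<close> by simp
    qed
  qed
  have "(\<Sum>g\<in>{g. c g \<noteq> 0}. c g) = (\<Sum>g\<in>d ` I. c g)"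
    by (rule sum.mono_neutral_left) (use assms(1) support in auto)
  also have "\<dots> = sum u I" unfolding c_def by (rule sum.image_gen[symmetric]) (rule assms(1))
  finally have sum_c: "(\<Sum>g\<in>{g. c g \<noteq> 0}. c g) = sum u I" .
  have "c g \<in> Ag g" for g unfolding c_def using u by (intro grade_sum) auto
  with finite_subset[OF support finite_imageI[OF assms(1)]] sum_c[symmetric]
  have "hcomp Ag (sum u I) = c" by (intro hcomp_unique)
  then show ?thesis by (simp add: c_def)
qed

lemma in_grade_if_hcomp_eq_0:
  assumes "\<And>g. g \<noteq> h \<Longrightarrow> hcomp Ag x g = 0"
  shows "x \<in> Ag h"
proof -
  have "x = (\<Sum>g\<in>{g. hcomp Ag x g \<noteq> 0}. hcomp Ag x g)" by (simp add: sum_hcomp)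
  also have "\<dots> = (\<Sum>g\<in>{h}. hcomp Ag x g)"
    by (rule sum.mono_neutral_left) (use assms in auto)
  finally show ?thesis using hcomp_in_grade[of x h] by simp
qed

lemma hcomp_nonzero:
  assumes "x \<noteq> 0"
  shows "\<exists>g. hcomp Ag x g \<noteq> 0"
proof (rule ccontr)
  assume "\<nexists>g. hcomp Ag x g \<noteq> 0"
  then have "{g. hcomp Ag x g \<noteq> 0} = {}" by auto
  then show False using sum_hcomp[of x] assms by simp
qed

lemma hcomp_homogeneous_mult:
  assumes "x \<in> Ag h"
  shows "hcomp Ag (x * a) (h + g) = x * hcomp Ag a g"
proof -
  define G where "G = {k. hcomp Ag a k \<noteq> 0}"
  have "hcomp Ag (x * a) (h + g) = hcomp Ag (\<Sum>k\<in>G. x * hcomp Ag a k) (h + g)"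
    by (simp add: G_def sum_hcomp sum_distrib_left[symmetric])
  also have "\<dots> = (\<Sum>k\<in>{k\<in>G. h + k = h + g}. x * hcomp Ag a k)"
    by (rule hcomp_sum) (simp_all add: G_def hcomp_finite grade_mult[OF assms] hcomp_in_grade)
  also have "{k\<in>G. h + k = h + g} = (if hcomp Ag a g = 0 then {} else {g})"
    by (auto simp: G_def)
  finally show ?thesis by simp
qed

lemma hcomp_mult_homogeneous:
  assumes "x \<in> Ag h"
  shows "hcomp Ag (a * x) (g + h) = hcomp Ag a g * x"
proof -
  define G where "G = {k. hcomp Ag a k \<noteq> 0}"
  have "hcomp Ag (a * x) (g + h) = hcomp Ag (\<Sum>k\<in>G. hcomp Ag a k * x) (g + h)"
    by (simp add: G_def sum_hcomp sum_distrib_right[symmetric])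
  also have "\<dots> = (\<Sum>k\<in>{k\<in>G. k + h = g + h}. hcomp Ag a k * x)"
    by (rule hcomp_sum) (simp_all add: G_def hcomp_finite grade_mult[OF _ assms] hcomp_in_grade)
  also have "{k\<in>G. k + h = g + h} = (if hcomp Ag a g = 0 then {} else {g})"
    by (auto simp: G_def)
  finally show ?thesis by simp
qed

lemma hcomp_max_degree:
  fixes w :: "'g \<Rightarrow> 'o::linorder"
  assumes "hcomp Ag x g0 \<noteq> 0"
  obtains m where "hcomp Ag x m \<noteq> 0" and "\<And>g. hcomp Ag x g \<noteq> 0 \<Longrightarrow> w g \<le> w m"
proof -
  let ?G = "{g. hcomp Ag x g \<noteq> 0}"
  have "Max (w ` ?G) \<in> w ` ?G" using hcomp_finite assms by (intro Max_in) auto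
  then obtain m where "m \<in> ?G" "w m = Max (w ` ?G)" by auto
  with that show ?thesis using hcomp_finite by auto
qed

lemma hcomp_mult_max_degree:
  fixes w :: "'g \<Rightarrow> 'o::linordered_ab_group_add"
  assumes wadd: "\<And>g h. w (g + h) = w g + w h" and winj: "inj w"
    and m: "\<And>g. hcomp Ag a g \<noteq> 0 \<Longrightarrow> w g \<le> w m"
    and n: "\<And>g. hcomp Ag b g \<noteq> 0 \<Longrightarrow> w g \<le> w n"
  shows "hcomp Ag (a * b) (m + n) = hcomp Ag a m * hcomp Ag b n"
proof -
  define Ga where "Ga = {g. hcomp Ag a g \<noteq> 0}"
  define Gb where "Gb = {g. hcomp Ag b g \<noteq> 0}"
  have "a * b = (\<Sum>g\<in>Ga. hcomp Ag a g) * (\<Sum>k\<in>Gb. hcomp Ag b k)"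
    by (simp add: Ga_def Gb_def sum_hcomp)
  also have "\<dots> = (\<Sum>p\<in>Ga \<times> Gb. hcomp Ag a (fst p) * hcomp Ag b (snd p))"
    by (simp add: sum_product sum.cartesian_product split_beta)
  finally have ab: "a * b = (\<Sum>p\<in>Ga \<times> Gb. hcomp Ag a (fst p) * hcomp Ag b (snd p))" .
  have top: "{p \<in> Ga \<times> Gb. fst p + snd p = m + n} \<subseteq> {(m, n)}"
  proof
    fix p assume "p \<in> {p \<in> Ga \<times> Gb. fst p + snd p = m + n}"
    then obtain g k where gk: "p = (g, k)" "g \<in> Ga" "k \<in> Gb" "g + k = m + n" by auto
    have "w g \<le> w m" "w k \<le> w n" using gk m n by (auto simp: Ga_def Gb_def)
    moreover have "w g + w k = w m + w n" using gk(4) wadd by metis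
    ultimately have "w g = w m" by (metis add_mono antisym_conv1 add_less_le_mono less_irrefl)
    then have "g = m" using winj by (simp add: inj_eq)
    with gk show "p \<in> {(m, n)}" by simp
  qed
  have "hcomp Ag (a * b) (m + n) =
      (\<Sum>p\<in>{p \<in> Ga \<times> Gb. fst p + snd p = m + n}. hcomp Ag a (fst p) * hcomp Ag b (snd p))"
    unfolding ab
    by (rule hcomp_sum) (simp_all add: Ga_def Gb_def hcomp_finite grade_mult hcomp_in_grade)
  also have "{p \<in> Ga \<times> Gb. fst p + snd p = m + n} = (if m \<in> Ga \<and> n \<in> Gb then {(m, n)} else {})"
    using top by auto
  finally show ?thesis by (auto simp: Ga_def Gb_def)
qed

text \<open>Comparing the components of top degree on both sides of x a = a y.\<close>

lemma degree_le_if_twisted: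
  fixes w :: "'g \<Rightarrow> 'o::linordered_ab_group_add"
  assumes domain: "is_domain TYPE('a)"
    and wadd: "\<And>g h. w (g + h) = w g + w h" and winj: "inj w"
    and x: "x \<in> Ag h" and a: "a \<noteq> 0" and eq: "x * a = a * y" and g: "hcomp Ag y g \<noteq> 0"
  shows "w g \<le> w h"
proof -
  obtain g0 where "hcomp Ag a g0 \<noteq> 0" using hcomp_nonzero[OF a] by blast
  then obtain m where m: "hcomp Ag a m \<noteq> 0" "\<And>g. hcomp Ag a g \<noteq> 0 \<Longrightarrow> w g \<le> w m"
    using hcomp_max_degree[where w = w] by blast
  obtain n where n: "hcomp Ag y n \<noteq> 0" "\<And>g. hcomp Ag y g \<noteq> 0 \<Longrightarrow> w g \<le> w n"
    using g hcomp_max_degree[where w = w] by blast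
  have "x * hcomp Ag a (m + n - h) = hcomp Ag (x * a) (m + n)"
    using hcomp_homogeneous_mult[OF x, of a "m + n - h"] by simp
  also have "\<dots> = hcomp Ag a m * hcomp Ag y n"
    using eq hcomp_mult_max_degree[OF wadd winj m(2) n(2)] by simp
  also have "\<dots> \<noteq> 0" using domain m(1) n(1) by (auto simp: is_domain_def)
  finally have "hcomp Ag a (m + n - h) \<noteq> 0" by auto
  then have "w (m + n - h) \<le> w m" by (rule m(2))
  have "w m + w n = w (h + (m + n - h))" by (simp add: wadd)
  also have "\<dots> = w h + w (m + n - h)" by (rule wadd)
  also have "\<dots> \<le> w h + w m" using \<open>w (m + n - h) \<le> w m\<close> by (rule add_left_mono)
  finally have "w n \<le> w h" by (simp add: add.commute)
  with n(2)[OF g] show ?thesis by simp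
qed

end

text \<open>Applying the previous lemma to both w and -w pins the degrees of \<phi> x down to that of x.\<close>

lemma Oz_preserves_grade:
  fixes \<iota> :: "'k::field \<Rightarrow> 'a::ring_1" and Ag :: "'g::ab_group_add \<Rightarrow> 'a set"
    and w :: "'g \<Rightarrow> 'o::linordered_ab_group_add"
  assumes prime: "prime_ring TYPE('a)" and fin: "finite_over_center TYPE('a)"
    and \<phi>: "\<phi> \<in> Oz \<iota>" and graded: "graded_algebra \<iota> Ag" and domain: "is_domain TYPE('a)"
    and wadd: "\<And>g h. w (g + h) = w g + w h" and winj: "inj w"
    and x: "x \<in> Ag h"
  shows "\<phi> x \<in> Ag h"
proof (rule in_grade_if_hcomp_eq_0[OF graded])
  obtain a where a: "a \<noteq> 0" "\<And>x. a * \<phi> x = x * a" using Oz_eq_eta[OF prime fin \<phi>] by blast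
  then have eq: "x * a = a * \<phi> x" by simp
  fix g assume "g \<noteq> h"
  show "hcomp Ag (\<phi> x) g = 0"
  proof (rule ccontr)
    assume g: "hcomp Ag (\<phi> x) g \<noteq> 0"
    have "w g \<le> w h"
      using degree_le_if_twisted[OF graded domain wadd winj x a(1) eq g] .
    moreover have "- w g \<le> - w h"
      using degree_le_if_twisted[OF graded domain, of "\<lambda>g. - w g"] wadd winj x a(1) eq g
      by (simp add: inj_def)
    ultimately have "w g = w h" by simp
    with winj \<open>g \<noteq> h\<close> show False by (simp add: inj_eq)
  qed
qed

text \<open>Comparing the components of degrees h + m in x a = a \<phi>(x) for homogeneous x of degree h
  shows that the component of a of any degree m again implements \<phi>.\<close>

theorem exists_homogeneous_eta:
  fixes \<iota> :: "'k::field \<Rightarrow> 'a::ring_1" and Ag :: "'g::linordered_ab_group_add \<Rightarrow> 'a set"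
  assumes prime: "prime_ring TYPE('a)" and fin: "finite_over_center TYPE('a)"
    and \<phi>: "\<phi> \<in> Oz \<iota>" and graded: "graded_algebra \<iota> Ag" and domain: "is_domain TYPE('a)"
  shows "\<exists>a. a \<noteq> 0 \<and> normal_elem a \<and> homogeneous Ag a \<and> (\<forall>x. a * \<phi> x = x * a)"
proof -
  obtain a where a: "a \<noteq> 0" "\<And>x. a * \<phi> x = x * a" using Oz_eq_eta[OF prime fin \<phi>] by blast
  obtain m where m: "hcomp Ag a m \<noteq> 0" using hcomp_nonzero[OF graded a(1)] by blast
  define am where "am = hcomp Ag a m"
  have on_grade: "am * \<phi> x = x * am" if x: "x \<in> Ag h" for x h
  proof -
    have "\<phi> x \<in> Ag h"
      using Oz_preserves_grade[OF prime fin \<phi> graded domain, of id] x by simp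
    then have "am * \<phi> x = hcomp Ag (a * \<phi> x) (m + h)"
      by (simp add: am_def hcomp_mult_homogeneous[OF graded])
    also have "\<dots> = hcomp Ag (x * a) (h + m)" by (simp add: a(2) add.commute)
    also have "\<dots> = x * am" by (simp add: am_def hcomp_homogeneous_mult[OF graded x])
    finally show ?thesis .
  qed
  have "am * \<phi> x = x * am" for x
  proof -
    define G where "G = {g. hcomp Ag x g \<noteq> 0}"
    have x: "x = (\<Sum>g\<in>G. hcomp Ag x g)" by (simp add: G_def sum_hcomp[OF graded])
    have "am * \<phi> x = (\<Sum>g\<in>G. am * \<phi> (hcomp Ag x g))"
      by (subst x) (simp add: Oz_sum[OF \<phi>] sum_distrib_left)
    also have "\<dots> = (\<Sum>g\<in>G. hcomp Ag x g * am)"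
      by (rule sum.cong[OF refl], rule on_grade, rule hcomp_in_grade[OF graded])
    also have "\<dots> = x * am" by (subst (2) x) (simp add: sum_distrib_right)
    finally show ?thesis .
  qed
  moreover have "am \<noteq> 0" using m by (simp add: am_def)
  moreover have "homogeneous Ag am" using hcomp_in_grade[OF graded] by (auto simp: homogeneous_def am_def)
  ultimately show ?thesis using eta_element_regular_normal[OF prime \<phi>] by blast
qed

text \<open>Z^n embeds additively into the ordered group of integer polynomials (ordered by the sign of
  the leading coefficient), so that Oz_preserves_grade applies to Z^n-gradings.\<close>

definition int_vec_to_poly :: "('n::finite \<Rightarrow> nat) \<Rightarrow> int ^ 'n \<Rightarrow> int poly" where
  "int_vec_to_poly \<nu> v = (\<Sum>i\<in>UNIV. monom (v $ i) (\<nu> i))"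

lemma int_vec_to_poly_add: "int_vec_to_poly \<nu> (u + v) = int_vec_to_poly \<nu> u + int_vec_to_poly \<nu> v"
  by (simp add: int_vec_to_poly_def sum.distrib add_monom[symmetric])

lemma coeff_int_vec_to_poly: "inj \<nu> \<Longrightarrow> coeff (int_vec_to_poly \<nu> v) (\<nu> j) = v $ j"
  by (simp add: int_vec_to_poly_def coeff_sum inj_eq if_distrib cong: if_cong)

lemma inj_int_vec_to_poly: "inj \<nu> \<Longrightarrow> inj (int_vec_to_poly \<nu>)"
  by (rule injI) (metis vec_eq_iff coeff_int_vec_to_poly)

theorem Oz_gr_eq_Oz:
  fixes \<iota> :: "'k::field \<Rightarrow> 'a::ring_1" and Ag :: "int ^ 'n \<Rightarrow> 'a set"
  assumes prime: "prime_ring TYPE('a)" and fin: "finite_over_center TYPE('a)"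
    and graded: "graded_algebra \<iota> Ag" and domain: "is_domain TYPE('a)"
  shows "Oz_gr \<iota> Ag = Oz \<iota>"
proof -
  obtain \<nu> :: "'n \<Rightarrow> nat" where \<nu>: "inj \<nu>"
    using finite_imp_inj_to_nat_seg[of "UNIV :: 'n set"] by auto
  note preserves = Oz_preserves_grade[OF prime fin _ graded domain int_vec_to_poly_add
      inj_int_vec_to_poly[OF \<nu>]]
  have "\<psi> ` Ag g = Ag g" if \<psi>: "\<psi> \<in> Oz \<iota>" for \<psi> g
  proof
    show "\<psi> ` Ag g \<subseteq> Ag g" using preserves[OF \<psi>] by blast
    show "Ag g \<subseteq> \<psi> ` Ag g"
    proof
      fix x assume "x \<in> Ag g"
      then have "inv \<psi> x \<in> Ag g" by (rule preserves[OF inv_in_Oz[OF \<psi>]])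
      moreover have "x = \<psi> (inv \<psi> x)" using OzD(1)[OF \<psi>] by (simp add: bij_is_surj surj_f_inv_f)
      ultimately show "x \<in> \<psi> ` Ag g" by blast
    qed
  qed
  then show ?thesis by (auto simp: Oz_gr_def)
qed

theorem lemma1p9:
  fixes \<iota> :: "'k::field_char_0 \<Rightarrow> 'a::ring_1"
    and \<phi> :: "'a \<Rightarrow> 'a"
  assumes "k_algebra \<iota>"
    and "prime_ring TYPE('a)"
    and "finite_over_center TYPE('a)"
    and "\<phi> \<in> Oz \<iota>"
  shows "(\<exists>a. regular_elem a \<and> normal_elem a \<and> (\<forall>x. a * \<phi> x = x * a)) \<and>
         (\<forall>Ag :: 'g::linordered_ab_group_add \<Rightarrow> 'a set.
           graded_algebra \<iota> Ag \<longrightarrow> is_domain TYPE('a) \<longrightarrow>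
           (\<exists>a. a \<noteq> 0 \<and> normal_elem a \<and> homogeneous Ag a \<and> (\<forall>x. a * \<phi> x = x * a))) \<and>
         (\<forall>Ag :: int ^ 'n \<Rightarrow> 'a set.
           graded_algebra \<iota> Ag \<longrightarrow> is_domain TYPE('a) \<longrightarrow> Oz_gr \<iota> Ag = Oz \<iota>)"
proof -
  obtain a where a: "a \<noteq> 0" "\<And>x. a * \<phi> x = x * a"
    using Oz_eq_eta[OF assms(2,3,4)] by blast
  then have "regular_elem a" and "normal_elem a"
    using eta_element_regular_normal[OF assms(2,4)] by blast+
  with a(2) show ?thesis
    using exists_homogeneous_eta[OF assms(2,3,4)] Oz_gr_eq_Oz[OF assms(2,3)] by blast
qed

end
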